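(* For $R>1$ let $s(R)>0$ be the unique positive number with $g_R(s(R))=s(R)$. Then $R\mapsto s(R)$ is strictly decreasing on $(1,\infty)$, and $$\lim_{R\to1^+}s(R)=\infty,\qquad\lim_{R\to\infty}s(R)=0.$$
   Context: For $R>1$, $g_R$ is the unique solution on $[0,\infty)$ of the initial value problem $$y'(w)=\frac{\arccos\!\big(\frac{w}{Ry}\big)-\arccos\!\big(\frac{w}{y}\big)\mathbf 1_{\{|w|\le|y|\}}}{R\sqrt{1-\big(\frac{w}{Ry}\big)^2}-\sqrt{1-\big(\frac{w}{y}\big)^2}\,\mathbf 1_{\{|w|\le|y|\}}},\qquad y(0)=\frac{\pi}{R-1}.$$ The function $w\mapsto w/g_R(w)$ is strictly increasing on $(0,\infty)$ with limit $0$ at $0$ and limit $R$ at $\infty$, so $s(R)$ (the unique $w>0$ with $w/g_R(w)=1$) is well defined. *)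

theory Defs
  imports "HOL-Analysis.Analysis"
begin

definition ind_le :: "real \<Rightarrow> real \<Rightarrow> real" where
  "ind_le w y = (if \<bar>w\<bar> \<le> \<bar>y\<bar> then 1 else 0)"

definition gF :: "real \<Rightarrow> real \<Rightarrow> real \<Rightarrow> real" where
  "gF R w y =
     (arccos (w / (R * y)) - arccos (w / y) * ind_le w y) /
     (R * sqrt (1 - (w / (R * y))\<^sup>2) - sqrt (1 - (w / y)\<^sup>2) * ind_le w y)"

definition g_solution :: "real \<Rightarrow> (real \<Rightarrow> real) \<Rightarrow> bool" where
  "g_solution R y \<longleftrightarrow>
     y 0 = pi / (R - 1) \<and>
     (\<forall>w\<ge>0. (y has_real_derivative gF R w (y w)) (at w within {0..}))"

definition g :: "real \<Rightarrow> real \<Rightarrow> real" where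
  "g R w = (THE v. \<exists>y. g_solution R y \<and> y w = v)"

definition s :: "real \<Rightarrow> real" where
  "s R = (THE w. w > 0 \<and> g R w = w)"

end

theory Submission
  imports Defs
begin

(*
  In terms of the ratio u = w / y, the right-hand side is gF R w y = gF_num R u / gF_den R u, where
  gF_num R is minus the derivative of first_integral R and
  gF_den R u = first_integral R u + u * gF_num R u.  This is exactly what makes
  y * first_integral R (w / y) constant along a solution, so y * first_integral R (w / y) = pi
  as long as 0 < w / y < R; and w / y cannot reach R, because first_integral R R = 0.
  As first_integral R > 0 on [0, R) and u \<mapsto> u * pi / first_integral R u increases from 0 to
  infinity there, every solution is the curve w = u * pi / first_integral R u,
  y = pi / first_integral R u: this gives uniqueness and existence at once.  The fixed point w = y
  is u = 1, so s R = pi / (R * arccos_integral (1 / R)), and R * arccos_integral (1 / R) increases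
  strictly from 0 to infinity on (1, infinity).
*)

lemma has_real_derivative_of_derivative_limit:
  fixes f f' :: "real \<Rightarrow> real"
  assumes "isCont f a"
    and "\<forall>\<^sub>F x in at a. (f has_real_derivative f' x) (at x)"
    and "(f' \<longlongrightarrow> L) (at a)"
  shows "(f has_real_derivative L) (at a)"
  unfolding has_field_derivative_iff
proof (rule lhopital)
  show "((\<lambda>x. f x - f a) \<longlongrightarrow> 0) (at a)"
    using assms(1) by (simp add: isCont_def LIM_zero)
  show "\<forall>\<^sub>F x in at a. ((\<lambda>x. f x - f a) has_real_derivative f' x) (at x)"
    using assms(2) by (rule eventually_mono) (auto intro!: derivative_eq_intros)
  show "\<forall>\<^sub>F x in at a. ((\<lambda>x. x - a) has_real_derivative 1) (at x)"
    by (intro always_eventually allI) (auto intro!: derivative_eq_intros)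
  show "((\<lambda>x. f' x / 1) \<longlongrightarrow> L) (at a)"
    using assms(3) by simp
qed (auto simp: eventually_at_filter LIM_zero)

(* arccos_integral x = \<integral> x..1 arccos *)
definition arccos_integral :: "real \<Rightarrow> real" where
  "arccos_integral x = sqrt (1 - x\<^sup>2) - x * arccos x"

lemma has_real_derivative_arccos_integral:
  assumes "-1 < x" "x < 1"
  shows "(arccos_integral has_real_derivative - arccos x) (at x)"
proof -
  have s: "sqrt (1 - x\<^sup>2) > 0"
    using assms by (simp add: abs_square_less_1)
  have "(arccos_integral has_real_derivative
      inverse (sqrt (1 - x\<^sup>2)) / 2 * (- (2 * x)) - (arccos x + x * inverse (- sqrt (1 - x\<^sup>2)))) (at x)"
    unfolding arccos_integral_def [abs_def] using s assms
    by (auto intro!: derivative_eq_intros DERIV_arccos simp: power2_eq_square)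
  also have "inverse (sqrt (1 - x\<^sup>2)) / 2 * (- (2 * x)) - (arccos x + x * inverse (- sqrt (1 - x\<^sup>2)))
      = - arccos x"
    using s by (simp add: field_simps)
  finally show ?thesis .
qed

lemma continuous_on_arccos_integral: "continuous_on {-1..1} arccos_integral"
  unfolding arccos_integral_def [abs_def] by (intro continuous_intros) auto

lemma arccos_integral_0 [simp]: "arccos_integral 0 = 1"
  and arccos_integral_1 [simp]: "arccos_integral 1 = 0"
  by (simp_all add: arccos_integral_def)

lemma arccos_integral_minus:
  assumes "\<bar>x\<bar> \<le> 1"
  shows "arccos_integral (- x) = arccos_integral x + pi * x"
  using assms by (simp add: arccos_integral_def arccos_minus algebra_simps)

lemma arccos_integral_strict_antimono:
  assumes "-1 \<le> a" "a < b" "b \<le> 1"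
  shows "arccos_integral b < arccos_integral a"
proof -
  have "- arccos_integral a < - arccos_integral b"
  proof (rule DERIV_pos_imp_increasing_open [OF assms(2)])
    fix x assume "a < x" "x < b"
    with assms have "-1 < x" "x < 1" by auto
    then show "\<exists>y. ((\<lambda>x. - arccos_integral x) has_real_derivative y) (at x) \<and> 0 < y"
      using has_real_derivative_arccos_integral arccos_lt_bounded
      by (auto intro!: exI [of _ "arccos x"] derivative_eq_intros)
  next
    show "continuous_on {a..b} (\<lambda>x. - arccos_integral x)"
      using assms by (intro continuous_intros continuous_on_subset [OF continuous_on_arccos_integral]) auto
  qed
  then show ?thesis by simp
qed

lemma arccos_integral_pos:
  assumes "-1 \<le> x" "x < 1"
  shows "0 < arccos_integral x"
  using arccos_integral_strict_antimono [OF assms] by simp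

lemma has_real_derivative_arccos_integral_min:
  assumes "-1 < t"
  shows "((\<lambda>t. arccos_integral (min t 1)) has_real_derivative - arccos (min t 1)) (at t)"
proof -
  have away_from_1:
    "((\<lambda>t. arccos_integral (min t 1)) has_real_derivative - arccos (min t 1)) (at t)"
    if "-1 < t" "t \<noteq> 1" for t
  proof (cases "t < 1")
    case True
    have "(arccos_integral has_real_derivative - arccos t) (at t)"
      using has_real_derivative_arccos_integral that True by auto
    then have "((\<lambda>t. arccos_integral (min t 1)) has_real_derivative - arccos t) (at t)"
      by (rule has_field_derivative_transform_within_open [of _ _ _ "{..<1}"]) (use True in auto)
    then show ?thesis
      using True by simp
  next
    case False
    have "((\<lambda>_. 0) has_real_derivative 0) (at t)"
      by simp
    then have "((\<lambda>t. arccos_integral (min t 1)) has_real_derivative 0) (at t)"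
      by (rule has_field_derivative_transform_within_open [of _ _ _ "{1<..}"]) (use that False in auto)
    then show ?thesis
      using that False by simp
  qed
  have "continuous_on {-1<..} (\<lambda>t. arccos_integral (min t 1))"
    by (intro continuous_intros continuous_on_compose2 [OF continuous_on_arccos_integral]) auto
  moreover have "continuous_on {-1<..} (\<lambda>t. - arccos (min t 1))"
    by (intro continuous_intros continuous_on_compose2 [OF continuous_on_arccos']) auto
  ultimately have cont: "isCont (\<lambda>t. arccos_integral (min t 1)) t"
      "isCont (\<lambda>t. - arccos (min t 1)) t" if "-1 < t" for t
    using that by (simp_all add: continuous_on_eq_continuous_at)
  show ?thesis
  proof (cases "t = 1")
    case True
    \<comment> \<open>Both terms of arccos_integral have infinite slope at 1; only their difference does not.\<close>
    have "((\<lambda>t. arccos_integral (min t 1)) has_real_derivative - arccos (min 1 1)) (at 1)"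
    proof (rule has_real_derivative_of_derivative_limit)
      show "\<forall>\<^sub>F x in at 1.
          ((\<lambda>t. arccos_integral (min t 1)) has_real_derivative - arccos (min x 1)) (at x)"
        using eventually_at_ball [of 1 "1::real" UNIV]
        by (auto elim!: eventually_mono intro!: away_from_1 simp: dist_real_def eventually_at_filter)
      show "((\<lambda>t. - arccos (min t 1)) \<longlongrightarrow> - arccos (min 1 1)) (at 1)"
        using cont(2) [of 1] by (simp add: isCont_def)
    qed (use cont(1) in simp)
    then show ?thesis
      using True by simp
  qed (use away_from_1 assms in auto)
qed

definition first_integral :: "real \<Rightarrow> real \<Rightarrow> real" where
  "first_integral R t = R * arccos_integral (t / R) - arccos_integral (min t 1)"

definition gF_num :: "real \<Rightarrow> real \<Rightarrow> real" where
  "gF_num R t = arccos (t / R) - arccos (min t 1)"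

definition gF_den :: "real \<Rightarrow> real \<Rightarrow> real" where
  "gF_den R t = R * sqrt (1 - (t / R)\<^sup>2) - sqrt (1 - (min t 1)\<^sup>2)"

lemma gF_eq_ratio:
  assumes "0 < y" "0 \<le> w"
  shows "gF R w y = gF_num R (w / y) / gF_den R (w / y)"
proof -
  have "w / (R * y) = (w / y) / R"
    by simp
  moreover have "\<bar>w\<bar> \<le> \<bar>y\<bar> \<longleftrightarrow> w / y \<le> 1"
    using assms by simp
  ultimately show ?thesis
    using assms by (simp add: gF_def ind_le_def gF_num_def gF_den_def min_def mult.commute)
qed

lemma first_integral_eq:
  "first_integral R t = gF_den R t - t * gF_num R t" if "R > 0"
  using that by (simp add: first_integral_def gF_den_def gF_num_def arccos_integral_def min_def algebra_simps)

lemma first_integral_0 [simp]: "first_integral R 0 = R - 1"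
  by (simp add: first_integral_def)

lemma first_integral_self: "1 \<le> R \<Longrightarrow> first_integral R R = 0"
  by (simp add: first_integral_def)

lemma first_integral_1: "first_integral R 1 = R * arccos_integral (1 / R)"
  by (simp add: first_integral_def)

lemma has_real_derivative_first_integral:
  assumes R: "R > 1" and t: "-1 < t" "t < R"
  shows "(first_integral R has_real_derivative - gF_num R t) (at t)"
proof -
  have "-1 < t / R" "t / R < 1"
    using R t by (auto simp: field_simps)
  then have "((\<lambda>t. arccos_integral (t / R)) has_real_derivative - arccos (t / R) * (1 / R)) (at t)"
    by (intro DERIV_chain2 [OF has_real_derivative_arccos_integral])
       (use R in \<open>auto intro!: derivative_eq_intros\<close>)
  then have "(first_integral R has_real_derivative R * (- arccos (t / R) * (1 / R)) - - arccos (min t 1)) (at t)"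
    unfolding first_integral_def [abs_def]
    using has_real_derivative_arccos_integral_min t by (intro DERIV_diff DERIV_cmult) auto
  then show ?thesis
    using R by (simp add: gF_num_def)
qed

lemma continuous_on_first_integral:
  assumes "R > 1"
  shows "continuous_on {-1..R} (first_integral R)"
  unfolding first_integral_def [abs_def] using assms
  by (intro continuous_intros continuous_on_compose2 [OF continuous_on_arccos_integral])
     (auto simp: field_simps)

lemma gF_den_pos:
  assumes R: "R > 1" and t: "-1 < t" "t < R"
  shows "gF_den R t > 0"
proof (cases "t \<le> 1")
  case True
  have "R * sqrt (1 - (t / R)\<^sup>2) = sqrt (R\<^sup>2 * (1 - (t / R)\<^sup>2))"
    using R by (simp add: real_sqrt_mult)
  also have "\<dots> = sqrt (R\<^sup>2 - t\<^sup>2)"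
    using R by (simp add: field_simps power2_eq_square)
  finally have "R * sqrt (1 - (t / R)\<^sup>2) = sqrt (R\<^sup>2 - t\<^sup>2)" .
  moreover have "sqrt (1 - t\<^sup>2) < sqrt (R\<^sup>2 - t\<^sup>2)"
    using R by simp
  ultimately show ?thesis
    using True by (simp add: gF_den_def)
next
  case False
  then have "(t / R)\<^sup>2 < 1"
    using R t by (simp add: abs_square_less_1)
  then show ?thesis
    using False R by (simp add: gF_den_def)
qed

lemma gF_num_pos:
  assumes R: "R > 1" and t: "0 < t" "t < R"
  shows "gF_num R t > 0"
proof (cases "t \<le> 1")
  case True
  have "t / R < t" "-1 \<le> t / R"
    using R t by (simp_all add: field_simps)
  then have "arccos t < arccos (t / R)"
    using True t by (intro arccos_less_arccos) auto
  then show ?thesis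
    using True by (simp add: gF_num_def)
next
  case False
  have "-1 < t / R" "t / R < 1"
    using R t by (auto simp: field_simps)
  then show ?thesis
    using False arccos_lt_bounded by (simp add: gF_num_def)
qed

lemma first_integral_minus:
  assumes "R > 1" "\<bar>t\<bar> \<le> 1"
  shows "first_integral R (- t) = first_integral R t"
proof -
  have "\<bar>t / R\<bar> \<le> 1"
    using assms by (simp add: field_simps)
  then show ?thesis
    using assms arccos_integral_minus [of "t / R"] arccos_integral_minus [of t]
    by (simp add: first_integral_def min_def field_simps abs_le_iff)
qed

lemma first_integral_pos:
  assumes R: "R > 1" and t: "-1 < t" "t < R"
  shows "first_integral R t > 0"
proof -
  have nonneg_case: "first_integral R x > 0" if x: "0 \<le> x" "x < R" for x
  proof -
    have "- first_integral R x < - first_integral R R"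
    proof (rule DERIV_pos_imp_increasing_open [OF x(2)])
      fix z assume "x < z" "z < R"
      with x show "\<exists>y. ((\<lambda>x. - first_integral R x) has_real_derivative y) (at z) \<and> 0 < y"
        using DERIV_minus [OF has_real_derivative_first_integral [OF R, of z]] gF_num_pos [OF R, of z]
        by auto
    next
      show "continuous_on {x..R} (\<lambda>x. - first_integral R x)"
        using x by (intro continuous_intros continuous_on_subset [OF continuous_on_first_integral [OF R]]) auto
    qed
    then show ?thesis
      using R by (simp add: first_integral_self)
  qed
  show ?thesis
  proof (cases "0 \<le> t")
    case False
    then show ?thesis
      using nonneg_case [of "- t"] first_integral_minus [OF R, of t] R t by auto
  qed (use nonneg_case t in auto)
qed

definition arg_of_ratio :: "real \<Rightarrow> real \<Rightarrow> real" where
  "arg_of_ratio R u = u * pi / first_integral R u"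

(* The parameter range starts at -1/2 rather than 0 only so that ratio_of_arg has a two-sided
   derivative at w = 0. *)
definition ratio_of_arg :: "real \<Rightarrow> real \<Rightarrow> real" where
  "ratio_of_arg R w = (THE u. u \<in> {-1/2..<R} \<and> arg_of_ratio R u = w)"

definition g_explicit :: "real \<Rightarrow> real \<Rightarrow> real" where
  "g_explicit R w = pi / first_integral R (ratio_of_arg R w)"

lemma arg_of_ratio_0 [simp]: "arg_of_ratio R 0 = 0"
  by (simp add: arg_of_ratio_def)

lemma has_real_derivative_arg_of_ratio:
  assumes R: "R > 1" and t: "-1 < t" "t < R"
  shows "(arg_of_ratio R has_real_derivative pi * gF_den R t / (first_integral R t)\<^sup>2) (at t)"
proof -
  have pos: "first_integral R t > 0"
    using first_integral_pos [OF R t] .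
  have "(arg_of_ratio R has_real_derivative
      (pi * first_integral R t - (t * pi) * (- gF_num R t)) / (first_integral R t * first_integral R t)) (at t)"
    unfolding arg_of_ratio_def [abs_def] using pos has_real_derivative_first_integral [OF R t]
    by (auto intro!: derivative_eq_intros)
  also have "(pi * first_integral R t - (t * pi) * (- gF_num R t)) / (first_integral R t * first_integral R t)
      = pi * gF_den R t / (first_integral R t)\<^sup>2"
    using R by (simp add: first_integral_eq power2_eq_square algebra_simps)
  finally show ?thesis .
qed

lemma arg_of_ratio_strict_mono:
  assumes R: "R > 1" and "-1 < a" "a < b" "b < R"
  shows "arg_of_ratio R a < arg_of_ratio R b"
proof (rule DERIV_pos_imp_increasing [OF \<open>a < b\<close>])
  fix x assume "a \<le> x" "x \<le> b"
  with assms have x: "-1 < x" "x < R" by auto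
  show "\<exists>y. (arg_of_ratio R has_real_derivative y) (at x) \<and> 0 < y"
    using has_real_derivative_arg_of_ratio [OF R x] gF_den_pos [OF R x] first_integral_pos [OF R x]
    by auto
qed

lemma arg_of_ratio_inj:
  assumes "R > 1" "-1 < u" "u < R" "-1 < v" "v < R" "arg_of_ratio R u = arg_of_ratio R v"
  shows "u = v"
  using arg_of_ratio_strict_mono [of R u v] arg_of_ratio_strict_mono [of R v u] assms
  by (cases u v rule: linorder_cases) auto

lemma arg_of_ratio_unbounded:
  assumes R: "R > 1" and w: "w \<ge> 0"
  shows "\<exists>b. 0 \<le> b \<and> b < R \<and> w \<le> arg_of_ratio R b"
proof -
  have "\<forall>\<^sub>F u in at_left R. u \<in> {-1..R}"
    using R by (intro eventually_mono [OF eventually_at_left_real [of "-1" R]]) auto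
  then have "(first_integral R \<longlongrightarrow> first_integral R R) (at_left R)"
    using continuous_on_tendsto_compose [OF continuous_on_first_integral [OF R] tendsto_ident_at] R
    by auto
  then have "(first_integral R \<longlongrightarrow> 0) (at_left R)"
    using R by (simp add: first_integral_self)
  then have "\<forall>\<^sub>F u in at_left R. first_integral R u < R / 2 * pi / (w + 1) \<and> u \<in> {R/2<..<R}"
    using w R by (intro eventually_conj order_tendstoD(2) eventually_at_left_real) auto
  then obtain b where "first_integral R b < R / 2 * pi / (w + 1) \<and> b \<in> {R/2<..<R}"
    using eventually_happens' [OF trivial_limit_at_left_real] by blast
  then have b: "first_integral R b < R / 2 * pi / (w + 1)" "R / 2 < b" "b < R"
    by auto
  have pos: "first_integral R b > 0"
    using first_integral_pos [OF R, of b] b R by auto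
  have "w < R / 2 * pi / first_integral R b"
    using b pos w by (simp add: field_simps)
  also have "\<dots> \<le> b * pi / first_integral R b"
    using b pos by (intro divide_right_mono mult_right_mono) auto
  finally show ?thesis
    using b R unfolding arg_of_ratio_def by (intro exI [of _ b]) auto
qed

lemma arg_of_ratio_surj:
  assumes R: "R > 1" and w: "arg_of_ratio R (-1/2) \<le> w"
  shows "\<exists>u \<in> {-1/2..<R}. arg_of_ratio R u = w"
proof -
  have cont: "isCont (arg_of_ratio R) x" if "-1 < x" "x < R" for x
    using has_real_derivative_arg_of_ratio [OF R that] by (rule DERIV_isCont)
  obtain b where b: "0 \<le> b" "b < R" "max w 0 \<le> arg_of_ratio R b"
    using arg_of_ratio_unbounded [OF R, of "max w 0"] by auto
  have "\<exists>u\<ge>-1/2. u \<le> b \<and> arg_of_ratio R u = w"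
    using w b by (intro IVT) (auto intro!: cont)
  then show ?thesis
    using b by auto
qed

lemma ratio_of_arg_arg_of_ratio:
  assumes "R > 1" "u \<in> {-1/2..<R}"
  shows "ratio_of_arg R (arg_of_ratio R u) = u"
  unfolding ratio_of_arg_def using assms arg_of_ratio_inj [OF \<open>R > 1\<close>]
  by (intro the_equality) auto

lemma arg_of_ratio_ratio_of_arg:
  assumes R: "R > 1" and w: "arg_of_ratio R (-1/2) \<le> w"
  shows "ratio_of_arg R w \<in> {-1/2..<R}" "arg_of_ratio R (ratio_of_arg R w) = w"
  using arg_of_ratio_surj [OF R w] ratio_of_arg_arg_of_ratio [OF R] by auto

lemma arg_of_ratio_neg_half: "R > 1 \<Longrightarrow> arg_of_ratio R (-1/2) < 0"
  using arg_of_ratio_strict_mono [of R "-1/2" 0] by simp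

lemma ratio_of_arg_range:
  assumes R: "R > 1" and w: "0 \<le> w"
  shows "0 \<le> ratio_of_arg R w" "ratio_of_arg R w < R" "arg_of_ratio R (ratio_of_arg R w) = w"
proof -
  have u: "ratio_of_arg R w \<in> {-1/2..<R}" "arg_of_ratio R (ratio_of_arg R w) = w"
    using arg_of_ratio_ratio_of_arg [OF R] arg_of_ratio_neg_half [OF R] w by fastforce+
  then show "ratio_of_arg R w < R" "arg_of_ratio R (ratio_of_arg R w) = w"
    by auto
  show "0 \<le> ratio_of_arg R w"
  proof (rule ccontr)
    assume "\<not> 0 \<le> ratio_of_arg R w"
    then have "arg_of_ratio R (ratio_of_arg R w) < arg_of_ratio R 0"
      using u R by (intro arg_of_ratio_strict_mono) auto
    then show False
      using u w by simp
  qed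
qed

lemma isCont_ratio_of_arg:
  assumes R: "R > 1" and w: "0 \<le> w"
  shows "isCont (ratio_of_arg R) w"
proof -
  define x where "x = ratio_of_arg R w"
  have x: "0 \<le> x" "x < R" "arg_of_ratio R x = w"
    using ratio_of_arg_range [OF R w] unfolding x_def by auto
  define d where "d = min (x + 1/2) (R - x) / 2"
  have d: "d > 0"
    using x by (simp add: d_def)
  have inv_cont: "ratio_of_arg R (arg_of_ratio R z) = z \<and> isCont (arg_of_ratio R) z"
    if "\<bar>z - x\<bar> \<le> d" for z
  proof -
    have "-1/2 < z" "z < R"
      using that x unfolding d_def abs_le_iff by auto
    then show ?thesis
      using ratio_of_arg_arg_of_ratio [OF R, of z]
        has_real_derivative_arg_of_ratio [OF R, of z, THEN DERIV_isCont]
      by auto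
  qed
  have "isCont (ratio_of_arg R) (arg_of_ratio R x)"
    by (rule isCont_inverse_function [OF d]) (simp_all add: inv_cont)
  then show ?thesis
    using x by simp
qed

lemma has_real_derivative_ratio_of_arg:
  assumes R: "R > 1" and w: "0 \<le> w"
  shows "(ratio_of_arg R has_real_derivative
            inverse (pi * gF_den R (ratio_of_arg R w) / (first_integral R (ratio_of_arg R w))\<^sup>2)) (at w)"
proof (rule DERIV_inverse_function [where a = "arg_of_ratio R (-1/2)" and b = "w + 1"])
  have u: "-1 < ratio_of_arg R w" "ratio_of_arg R w < R"
    using ratio_of_arg_range [OF R w] by auto
  show "(arg_of_ratio R has_real_derivative
      pi * gF_den R (ratio_of_arg R w) / (first_integral R (ratio_of_arg R w))\<^sup>2) (at (ratio_of_arg R w))"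
    by (rule has_real_derivative_arg_of_ratio [OF R u])
  show "pi * gF_den R (ratio_of_arg R w) / (first_integral R (ratio_of_arg R w))\<^sup>2 \<noteq> 0"
    using gF_den_pos [OF R u] first_integral_pos [OF R u] by auto
  show "arg_of_ratio R (-1/2) < w"
    using arg_of_ratio_neg_half [OF R] w by simp
  show "\<And>y. arg_of_ratio R (-1/2) < y \<Longrightarrow> y < w + 1 \<Longrightarrow> arg_of_ratio R (ratio_of_arg R y) = y"
    using arg_of_ratio_ratio_of_arg [OF R] by auto
qed (use isCont_ratio_of_arg [OF R w] in auto)

lemma g_explicit_pos:
  assumes "R > 1" "0 \<le> w"
  shows "g_explicit R w > 0"
  using assms first_integral_pos [of R "ratio_of_arg R w"] ratio_of_arg_range [OF assms]
  by (simp add: g_explicit_def)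

lemma divide_g_explicit:
  assumes R: "R > 1" and w: "0 \<le> w"
  shows "w / g_explicit R w = ratio_of_arg R w"
proof -
  have "first_integral R (ratio_of_arg R w) > 0"
    using first_integral_pos [OF R] ratio_of_arg_range [OF R w] by auto
  moreover have "w = ratio_of_arg R w * pi / first_integral R (ratio_of_arg R w)"
    using ratio_of_arg_range(3) [OF R w] by (simp add: arg_of_ratio_def)
  ultimately show ?thesis
    by (simp add: g_explicit_def field_simps)
qed

lemma has_real_derivative_g_explicit:
  assumes R: "R > 1" and w: "0 \<le> w"
  shows "(g_explicit R has_real_derivative gF_num R (ratio_of_arg R w) / gF_den R (ratio_of_arg R w)) (at w)"
proof -
  define u where "u = ratio_of_arg R w"
  have u: "-1 < u" "u < R"
    using ratio_of_arg_range [OF R w] unfolding u_def by auto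
  have pos: "first_integral R u > 0" "gF_den R u > 0"
    using first_integral_pos [OF R u] gF_den_pos [OF R u] by auto
  have "((\<lambda>w. first_integral R (ratio_of_arg R w)) has_real_derivative
      - gF_num R u * inverse (pi * gF_den R u / (first_integral R u)\<^sup>2)) (at w)"
    using DERIV_chain2 [OF has_real_derivative_first_integral [OF R u, unfolded u_def]
        has_real_derivative_ratio_of_arg [OF R w]]
    unfolding u_def by simp
  then have "(g_explicit R has_real_derivative
      (0 * first_integral R u - pi * (- gF_num R u * inverse (pi * gF_den R u / (first_integral R u)\<^sup>2)))
        / (first_integral R u * first_integral R u)) (at w)"
    unfolding g_explicit_def [abs_def] using pos unfolding u_def
    by (intro DERIV_divide) auto
  also have "(0 * first_integral R u - pi * (- gF_num R u * inverse (pi * gF_den R u / (first_integral R u)\<^sup>2)))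
        / (first_integral R u * first_integral R u) = gF_num R u / gF_den R u"
    using pos by (simp add: field_simps power2_eq_square)
  finally show ?thesis
    unfolding u_def .
qed

lemma g_solution_g_explicit:
  assumes R: "R > 1"
  shows "g_solution R (g_explicit R)"
  unfolding g_solution_def
proof safe
  have "ratio_of_arg R 0 = 0"
    using ratio_of_arg_arg_of_ratio [OF R, of 0] R by simp
  then show "g_explicit R 0 = pi / (R - 1)"
    by (simp add: g_explicit_def)
next
  fix w :: real
  assume w: "0 \<le> w"
  have "gF R w (g_explicit R w) = gF_num R (ratio_of_arg R w) / gF_den R (ratio_of_arg R w)"
    using gF_eq_ratio [OF g_explicit_pos [OF R w] w] divide_g_explicit [OF R w] by simp
  then show "(g_explicit R has_real_derivative gF R w (g_explicit R w)) (at w within {0..})"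
    using has_real_derivative_g_explicit [OF R w] by (simp add: has_field_derivative_at_within)
qed

lemma has_real_derivative_conserved:
  assumes R: "R > 1" and sol: "g_solution R y" and v: "0 \<le> v" "0 < y v" "v < R * y v"
  shows "((\<lambda>v. y v * first_integral R (v / y v)) has_real_derivative 0) (at v within {0..})"
proof -
  define u where "u = v / y v"
  define y' where "y' = gF R v (y v)"
  have u: "-1 < u" "u < R"
    using v unfolding u_def by (auto simp: field_simps)
  have yd: "(y has_real_derivative y') (at v within {0..})"
    using sol v unfolding g_solution_def y'_def by auto
  have y': "y' = gF_num R u / gF_den R u"
    unfolding y'_def u_def by (rule gF_eq_ratio [OF v(2,1)])
  have du: "((\<lambda>v. v / y v) has_real_derivative (1 * y v - v * y') / (y v * y v)) (at v within {0..})"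
    using v by (intro DERIV_divide [OF DERIV_ident yd]) auto
  have "((\<lambda>v. first_integral R (v / y v)) has_real_derivative
      - gF_num R u * ((1 * y v - v * y') / (y v * y v))) (at v within {0..})"
    using DERIV_chain2 [OF _ du, OF has_real_derivative_first_integral [OF R u, unfolded u_def]]
    unfolding u_def .
  then have "((\<lambda>v. y v * first_integral R (v / y v)) has_real_derivative
      y' * first_integral R u + - gF_num R u * ((1 * y v - v * y') / (y v * y v)) * y v) (at v within {0..})"
    unfolding u_def by (rule DERIV_mult [OF yd])
  also have "y' * first_integral R u + - gF_num R u * ((1 * y v - v * y') / (y v * y v)) * y v = 0"
  proof -
    have "gF_den R u > 0" "R > 0"
      using gF_den_pos [OF R u] R by auto
    then show ?thesis
      using v unfolding y' first_integral_eq [OF \<open>R > 0\<close>] u_def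
      by (simp add: field_simps)
  qed
  finally show ?thesis .
qed

lemma solution_conserved:
  assumes R: "R > 1" and sol: "g_solution R y"
    and S: "S \<subseteq> {0..}" "convex S" "0 \<in> S"
    and admissible: "\<And>v. v \<in> S \<Longrightarrow> 0 < y v \<and> v < R * y v"
    and "v \<in> S"
  shows "y v * first_integral R (v / y v) = pi"
proof -
  have "\<exists>c. \<forall>v\<in>S. y v * first_integral R (v / y v) = c"
  proof (rule has_field_derivative_zero_constant [OF S(2)])
    fix v assume "v \<in> S"
    with S admissible show "((\<lambda>v. y v * first_integral R (v / y v)) has_real_derivative 0) (at v within S)"
      by (intro DERIV_subset [OF has_real_derivative_conserved [OF R sol]]) auto
  qed
  then obtain c where c: "\<forall>v\<in>S. y v * first_integral R (v / y v) = c"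
    by blast
  have "y 0 = pi / (R - 1)"
    using sol unfolding g_solution_def by auto
  then have "y 0 * first_integral R (0 / y 0) = pi"
    using R by simp
  then show ?thesis
    using c S(3) \<open>v \<in> S\<close> by auto
qed

lemma continuous_on_solution:
  assumes "g_solution R y"
  shows "continuous_on {0..} y"
  using assms unfolding g_solution_def continuous_on_eq_continuous_within
  by (auto intro: DERIV_continuous)

lemma isCont_solution:
  assumes "g_solution R y" "0 < m"
  shows "isCont y m"
proof -
  have "(y has_real_derivative gF R m (y m)) (at m within {0..})"
    using assms unfolding g_solution_def by simp
  then have "(y has_real_derivative gF R m (y m)) (at m within {0<..})"
    by (rule DERIV_subset) auto
  then have "(y has_real_derivative gF R m (y m)) (at m)"
    using at_within_open [of m "{0<..}"] assms(2) by simp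
  then show ?thesis
    by (rule DERIV_isCont)
qed

(* Leaving through w = R y would force the conserved quantity pi to tend to y * first_integral R R = 0;
   leaving through y = 0 is impossible since R y \<ge> w > 0 up to the exit point. *)
lemma solution_admissible_at_first_exit:
  assumes R: "R > 1" and sol: "g_solution R y" and m: "0 < m"
    and before: "\<And>v. 0 \<le> v \<Longrightarrow> v < m \<Longrightarrow> 0 < y v \<and> v < R * y v"
  shows "0 < y m \<and> m < R * y m"
proof -
  have ylim: "(y \<longlongrightarrow> y m) (at_left m)"
    using isCont_solution [OF sol m] by (simp add: isCont_def filterlim_at_split)
  have near: "\<forall>\<^sub>F v in at_left m. v \<in> {0<..<m}"
    using m by (intro eventually_at_left_real) auto
  have "0 \<le> R * y m - m"
  proof (rule tendsto_lowerbound [OF _ _ trivial_limit_at_left_real])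
    show "((\<lambda>v. R * y v - v) \<longlongrightarrow> R * y m - m) (at_left m)"
      by (intro tendsto_intros ylim)
    show "\<forall>\<^sub>F v in at_left m. 0 \<le> R * y v - v"
      using near by (rule eventually_mono) (use before in \<open>auto simp: less_imp_le\<close>)
  qed
  then have "0 < R * y m"
    using m by linarith
  then have ym: "0 < y m"
    using R by (simp add: zero_less_mult_iff)
  have "m \<noteq> R * y m"
  proof
    assume exit: "m = R * y m"
    have "((\<lambda>v. v / y v) \<longlongrightarrow> m / y m) (at_left m)"
      using ym by (intro tendsto_intros ylim) auto
    moreover have "m / y m = R"
      using ym exit by (metis nonzero_mult_div_cancel_right order_less_irrefl)
    ultimately have "((\<lambda>v. v / y v) \<longlongrightarrow> R) (at_left m)"
      by simp
    moreover have "\<forall>\<^sub>F v in at_left m. v / y v \<in> {-1..R}"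
      using near
    proof (rule eventually_mono)
      fix v assume "v \<in> {0<..<m}"
      with before [of v] show "v / y v \<in> {-1..R}"
        by (auto simp: field_simps)
    qed
    ultimately have "((\<lambda>v. first_integral R (v / y v)) \<longlongrightarrow> first_integral R R) (at_left m)"
      using R by (intro continuous_on_tendsto_compose [OF continuous_on_first_integral [OF R]]) auto
    then have "((\<lambda>v. y v * first_integral R (v / y v)) \<longlongrightarrow> y m * 0) (at_left m)"
      using R by (intro tendsto_mult ylim) (simp add: first_integral_self)
    moreover have "((\<lambda>v. y v * first_integral R (v / y v)) \<longlongrightarrow> pi) (at_left m)"
    proof (rule tendsto_eventually, rule eventually_mono [OF near])
      fix v assume "v \<in> {0<..<m}"
      then show "y v * first_integral R (v / y v) = pi"
        by (intro solution_conserved [OF R sol, of "{0..<m}"]) (auto simp: before)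
    qed
    ultimately have "y m * 0 = pi"
      by (rule tendsto_unique [OF trivial_limit_at_left_real])
    then show False
      by simp
  qed
  then show ?thesis
    using ym \<open>0 \<le> R * y m - m\<close> by auto
qed

lemma solution_admissible:
  assumes R: "R > 1" and sol: "g_solution R y" and w: "0 \<le> w"
  shows "\<forall>v\<in>{0..w}. 0 < y v \<and> v < R * y v"
proof (rule ccontr)
  define B where "B = {v \<in> {0..w}. y v \<le> 0} \<union> {v \<in> {0..w}. R * y v \<le> v}"
  assume "\<not> (\<forall>v\<in>{0..w}. 0 < y v \<and> v < R * y v)"
  then have "B \<noteq> {}"
    unfolding B_def by (auto simp: not_less)
  moreover have "compact B"
  proof -
    have "continuous_on {0..w} y"
      using continuous_on_subset [OF continuous_on_solution [OF sol]] by auto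
    then have "closed B"
      unfolding B_def by (intro closed_Un continuous_on_closed_Collect_le continuous_intros) auto
    moreover have "bounded B"
      unfolding B_def by (rule bounded_subset [OF bounded_closed_interval]) auto
    ultimately show ?thesis
      by (simp add: compact_eq_bounded_closed)
  qed
  ultimately obtain m where m: "m \<in> B" and first: "\<And>v. v \<in> B \<Longrightarrow> m \<le> v"
    using compact_attains_inf by metis
  have "y 0 = pi / (R - 1)"
    using sol unfolding g_solution_def by auto
  then have "0 < y 0"
    using R by simp
  then have "0 \<notin> B"
    using R unfolding B_def by (auto simp: not_le)
  then have "0 < m"
    using m unfolding B_def by (cases "m = 0") auto
  moreover have "0 < y v \<and> v < R * y v" if "0 \<le> v" "v < m" for v
    using first [of v] that m unfolding B_def by force
  ultimately have "0 < y m \<and> m < R * y m"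
    by (rule solution_admissible_at_first_exit [OF R sol])
  then show False
    using m unfolding B_def by auto
qed

lemma solution_eq_g_explicit:
  assumes R: "R > 1" and sol: "g_solution R y" and w: "0 \<le> w"
  shows "y w = g_explicit R w"
proof -
  have admissible: "\<forall>v\<in>{0..w}. 0 < y v \<and> v < R * y v"
    by (rule solution_admissible [OF R sol w])
  define u where "u = w / y w"
  have "y w * first_integral R u = pi"
    unfolding u_def using admissible w by (intro solution_conserved [OF R sol, of "{0..w}"]) auto
  moreover have u: "0 \<le> u" "u < R"
    using admissible w unfolding u_def by (auto simp: field_simps)
  moreover have "first_integral R u > 0"
    using first_integral_pos [OF R] u by auto
  ultimately have yw: "y w = pi / first_integral R u" and "arg_of_ratio R u = w"
    using admissible w unfolding arg_of_ratio_def u_def by (auto simp: field_simps)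
  then have "ratio_of_arg R w = u"
    using ratio_of_arg_arg_of_ratio [OF R, of u] u by auto
  then show ?thesis
    using yw by (simp add: g_explicit_def)
qed

lemma g_eq_g_explicit:
  assumes "R > 1" "0 \<le> w"
  shows "g R w = g_explicit R w"
  unfolding g_def
proof (rule the_equality)
  show "\<exists>y. g_solution R y \<and> y w = g_explicit R w"
    using g_solution_g_explicit [OF assms(1)] by blast
qed (use solution_eq_g_explicit [OF assms(1) _ assms(2)] in blast)

lemma s_eq:
  assumes R: "R > 1"
  shows "s R = pi / (R * arccos_integral (1 / R))"
proof -
  have pos: "first_integral R 1 > 0"
    using first_integral_pos [OF R, of 1] R by simp
  have "s R = pi / first_integral R 1"
    unfolding s_def
  proof (rule the_equality)
    have "ratio_of_arg R (arg_of_ratio R 1) = 1"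
      using ratio_of_arg_arg_of_ratio [OF R, of 1] R by simp
    then have "g_explicit R (pi / first_integral R 1) = pi / first_integral R 1"
      by (simp add: g_explicit_def arg_of_ratio_def)
    then show "0 < pi / first_integral R 1 \<and> g R (pi / first_integral R 1) = pi / first_integral R 1"
      using g_eq_g_explicit [OF R, of "pi / first_integral R 1"] pos by auto
  next
    fix w assume w: "0 < w \<and> g R w = w"
    then have fixed: "g_explicit R w = w"
      using g_eq_g_explicit [OF R, of w] by auto
    then have "ratio_of_arg R w = 1"
      using divide_g_explicit [OF R, of w] w by auto
    then show "w = pi / first_integral R 1"
      using fixed by (simp add: g_explicit_def)
  qed
  then show ?thesis
    by (simp add: first_integral_1)
qed

lemma arccos_integral_inverse_pos:
  assumes "1 < R"
  shows "0 < R * arccos_integral (1 / R)"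
  using assms by (intro mult_pos_pos arccos_integral_pos) (auto simp: field_simps)

lemma arccos_integral_inverse_strict_mono:
  assumes "1 < R1" "R1 < R2"
  shows "R1 * arccos_integral (1 / R1) < R2 * arccos_integral (1 / R2)"
proof -
  have "arccos_integral (1 / R1) < arccos_integral (1 / R2)"
    using assms by (intro arccos_integral_strict_antimono) (auto simp: field_simps)
  moreover have "0 < arccos_integral (1 / R1)"
    using assms by (intro arccos_integral_pos) (auto simp: field_simps)
  ultimately show ?thesis
    using assms by (intro mult_strict_mono) auto
qed

lemma arccos_integral_inverse_lower_bound:
  assumes R: "1 < R"
  shows "R - 1 - pi \<le> R * arccos_integral (1 / R)"
proof -
  define x where "x = 1 / R"
  have x: "0 < x" "x < 1"
    using R unfolding x_def by auto
  have "(1 - x)\<^sup>2 \<le> 1 - x\<^sup>2"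
    using x by (simp add: power2_eq_square algebra_simps)
  then have "1 - x \<le> sqrt (1 - x\<^sup>2)"
    by (rule real_le_rsqrt)
  then have "R - 1 \<le> R * sqrt (1 - x\<^sup>2)"
    using R mult_left_mono [of "1 - x" "sqrt (1 - x\<^sup>2)" R] unfolding x_def by (simp add: field_simps)
  moreover have "R * arccos_integral x = R * sqrt (1 - x\<^sup>2) - arccos x"
    using R unfolding arccos_integral_def x_def by (simp add: right_diff_distrib)
  moreover have "arccos x \<le> pi"
    using x by (intro arccos_ubound) auto
  ultimately show ?thesis
    unfolding x_def by linarith
qed

lemma s_strict_antimono:
  assumes "1 < R1" "R1 < R2"
  shows "s R2 < s R1"
  using arccos_integral_inverse_pos [OF assms(1)] arccos_integral_inverse_strict_mono [OF assms] assms
  by (simp add: s_eq divide_strict_left_mono)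

lemma filterlim_s_at_right_1: "filterlim s at_top (at_right 1)"
proof -
  have "((\<lambda>R. arccos_integral (1 / R)) \<longlongrightarrow> arccos_integral 1) (at_right 1)"
    by (rule continuous_on_tendsto_compose [OF continuous_on_arccos_integral])
       (auto intro!: tendsto_eq_intros eventually_mono [OF eventually_at_right_less] simp: field_simps)
  then have "((\<lambda>R. R * arccos_integral (1 / R)) \<longlongrightarrow> 0) (at_right 1)"
    using tendsto_mult [OF tendsto_ident_at] by fastforce
  moreover have "\<forall>\<^sub>F R in at_right 1. 0 < R * arccos_integral (1 / R)"
    by (rule eventually_mono [OF eventually_at_right_less]) (rule arccos_integral_inverse_pos)
  ultimately have "filterlim (\<lambda>R. pi * inverse (R * arccos_integral (1 / R))) at_top (at_right 1)"
    by (intro filterlim_tendsto_pos_mult_at_top [OF tendsto_const pi_gt_zero] filterlim_inverse_at_top)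
  moreover have "\<forall>\<^sub>F R in at_right 1. pi * inverse (R * arccos_integral (1 / R)) = s R"
    by (rule eventually_mono [OF eventually_at_right_less]) (simp add: s_eq divide_inverse)
  ultimately show ?thesis
    using filterlim_cong by fastforce
qed

lemma tendsto_s_at_top: "(s \<longlongrightarrow> 0) at_top"
proof -
  have "filterlim (\<lambda>R::real. (-1 - pi) + R) at_top at_top"
    by (rule filterlim_tendsto_add_at_top [OF tendsto_const filterlim_ident])
  moreover have "\<forall>\<^sub>F R in at_top. (-1 - pi) + R \<le> R * arccos_integral (1 / R)"
    by (rule eventually_mono [OF eventually_gt_at_top [of 1]])
       (use arccos_integral_inverse_lower_bound in force)
  ultimately have "filterlim (\<lambda>R. R * arccos_integral (1 / R)) at_top at_top"
    by (rule filterlim_at_top_mono)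
  then have "((\<lambda>R. pi / (R * arccos_integral (1 / R))) \<longlongrightarrow> 0) at_top"
    by (intro tendsto_divide_0 [OF tendsto_const] filterlim_at_top_imp_at_infinity)
  moreover have "\<forall>\<^sub>F R in at_top. pi / (R * arccos_integral (1 / R)) = s R"
    by (rule eventually_mono [OF eventually_gt_at_top [of 1]]) (simp add: s_eq)
  ultimately show ?thesis
    by (rule tendsto_cong [THEN iffD1, rotated])
qed

theorem proposition3p2:
  shows "(\<forall>R1 R2. 1 < R1 \<longrightarrow> R1 < R2 \<longrightarrow> s R2 < s R1)
    \<and> filterlim s at_top (at_right 1)
    \<and> (s \<longlongrightarrow> 0) at_top"
  using s_strict_antimono filterlim_s_at_right_1 tendsto_s_at_top by blast

end
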